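(* Let $G$ be a connected $\mathrm{NP}_1$-digital topological group with identity $e$, and let $S$ be the set of points of $G$ adjacent to $e$. Then $S$ generates $G$ as a group, and $G$ is the Cayley graph $\Gamma(G,S)$.
   Context: A digital image is a finite set with a reflexive symmetric adjacency relation (a finite reflexive graph); continuous maps send adjacent points to adjacent points; connected means graph-connected. On $G\times G$, $\mathrm{NP}_1$ declares $(a,b)\sim(c,d)$ iff either $a=c$ and $b\sim d$, or $b=d$ and $a\sim c$. An $\mathrm{NP}_1$-digital topological group is a digital image $G$ with a group structure whose multiplication is $\mathrm{NP}_1$-continuous and whose inversion is continuous. For a finite group $G$ and $S\subseteq G$, the Cayley graph $\Gamma(G,S)$ has vertex set $G$ and $a\sim b$ iff $ab^{-1}\in S$ or $ba^{-1}\in S$. *)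

theory Defs
  imports "HOL-Algebra.Generated_Groups"
begin

definition digital_image :: "'a set \<Rightarrow> ('a \<Rightarrow> 'a \<Rightarrow> bool) \<Rightarrow> bool" where
  "digital_image X adj \<longleftrightarrow> finite X \<and> (\<forall>x\<in>X. adj x x)
     \<and> (\<forall>x\<in>X. \<forall>y\<in>X. adj x y \<longrightarrow> adj y x)"

definition digitally_continuous ::
  "'a set \<Rightarrow> ('a \<Rightarrow> 'a \<Rightarrow> bool) \<Rightarrow> 'b set \<Rightarrow> ('b \<Rightarrow> 'b \<Rightarrow> bool) \<Rightarrow> ('a \<Rightarrow> 'b) \<Rightarrow> bool" where
  "digitally_continuous X adjX Y adjY f \<longleftrightarrow> (\<forall>x\<in>X. f x \<in> Y)
     \<and> (\<forall>x\<in>X. \<forall>y\<in>X. adjX x y \<longrightarrow> adjY (f x) (f y))"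

definition digitally_connected :: "'a set \<Rightarrow> ('a \<Rightarrow> 'a \<Rightarrow> bool) \<Rightarrow> bool" where
  "digitally_connected X adj \<longleftrightarrow>
     (\<forall>x\<in>X. \<forall>y\<in>X. (\<lambda>u v. u \<in> X \<and> v \<in> X \<and> adj u v)\<^sup>*\<^sup>* x y)"

definition NP1_adj :: "('a \<Rightarrow> 'a \<Rightarrow> bool) \<Rightarrow> ('b \<Rightarrow> 'b \<Rightarrow> bool) \<Rightarrow> ('a \<times> 'b) \<Rightarrow> ('a \<times> 'b) \<Rightarrow> bool" where
  "NP1_adj adjA adjB p q \<longleftrightarrow>
     (fst p = fst q \<and> adjB (snd p) (snd q)) \<or> (snd p = snd q \<and> adjA (fst p) (fst q))"

definition NP1_digital_topological_group :: "('a, 'b) monoid_scheme \<Rightarrow> ('a \<Rightarrow> 'a \<Rightarrow> bool) \<Rightarrow> bool" where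
  "NP1_digital_topological_group G adj \<longleftrightarrow>
     group G \<and> digital_image (carrier G) adj
     \<and> digitally_continuous (carrier G \<times> carrier G) (NP1_adj adj adj) (carrier G) adj
          (\<lambda>p. fst p \<otimes>\<^bsub>G\<^esub> snd p)
     \<and> digitally_continuous (carrier G) adj (carrier G) adj (\<lambda>x. inv\<^bsub>G\<^esub> x)"

definition cayley_adj :: "('a, 'b) monoid_scheme \<Rightarrow> 'a set \<Rightarrow> 'a \<Rightarrow> 'a \<Rightarrow> bool" where
  "cayley_adj G S a b \<longleftrightarrow>
     a \<otimes>\<^bsub>G\<^esub> inv\<^bsub>G\<^esub> b \<in> S \<or> b \<otimes>\<^bsub>G\<^esub> inv\<^bsub>G\<^esub> a \<in> S"

end

theory Submission
  imports Defs
begin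

text \<open>Continuity of multiplication in its first argument makes adjacency invariant under right
  translation. Hence \<open>a \<sim> b\<close> iff \<open>a b\<inverse> \<sim> e\<close>, i.e. iff \<open>a b\<inverse> \<in> S\<close>, which is exactly Cayley
  adjacency. Walking along a path from \<open>e\<close> to any \<open>x\<close>, each step multiplies on the left by an
  element of \<open>S\<close>, so \<open>x\<close> lies in the subgroup generated by \<open>S\<close>.\<close>

lemma adj_mult_right:
  assumes "digitally_continuous (carrier G \<times> carrier G) (NP1_adj adj adj) (carrier G) adj
             (\<lambda>p. fst p \<otimes>\<^bsub>G\<^esub> snd p)"
    and "a \<in> carrier G" "b \<in> carrier G" "c \<in> carrier G" "adj a b"
  shows "adj (a \<otimes>\<^bsub>G\<^esub> c) (b \<otimes>\<^bsub>G\<^esub> c)"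
proof -
  have "NP1_adj adj adj (a, c) (b, c)" using assms(5) by (simp add: NP1_adj_def)
  then show ?thesis using assms(1-4) unfolding digitally_continuous_def by fastforce
qed

context
  fixes G :: "('a, 'b) monoid_scheme" (structure) and adj :: "'a \<Rightarrow> 'a \<Rightarrow> bool"
  assumes dtg: "NP1_digital_topological_group G adj"
begin

interpretation group G
  using dtg by (simp add: NP1_digital_topological_group_def)

lemma NP1_adj_sym: "x \<in> carrier G \<Longrightarrow> y \<in> carrier G \<Longrightarrow> adj x y \<Longrightarrow> adj y x"
  using dtg by (auto simp: NP1_digital_topological_group_def digital_image_def)

lemma NP1_adj_mult_right_iff:
  assumes "a \<in> carrier G" "b \<in> carrier G" "c \<in> carrier G"
  shows "adj (a \<otimes> c) (b \<otimes> c) \<longleftrightarrow> adj a b"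
proof
  have mult_cont: "digitally_continuous (carrier G \<times> carrier G) (NP1_adj adj adj) (carrier G) adj
      (\<lambda>p. fst p \<otimes> snd p)"
    using dtg by (simp add: NP1_digital_topological_group_def)
  show "adj a b \<Longrightarrow> adj (a \<otimes> c) (b \<otimes> c)"
    using adj_mult_right[OF mult_cont] assms by blast
  assume "adj (a \<otimes> c) (b \<otimes> c)"
  then have "adj (a \<otimes> c \<otimes> inv c) (b \<otimes> c \<otimes> inv c)"
    using adj_mult_right[OF mult_cont] assms by simp
  then show "adj a b" using assms by (simp add: m_assoc)
qed

lemma NP1_adj_iff_one_adj_quotient:
  assumes "a \<in> carrier G" "b \<in> carrier G"
  shows "adj a b \<longleftrightarrow> adj \<one> (a \<otimes> inv b)"
proof -
  have "adj a b \<longleftrightarrow> adj (a \<otimes> inv b) (b \<otimes> inv b)"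
    using assms by (intro NP1_adj_mult_right_iff[symmetric]) auto
  also have "\<dots> \<longleftrightarrow> adj (a \<otimes> inv b) \<one>"
    using assms by simp
  also have "\<dots> \<longleftrightarrow> adj \<one> (a \<otimes> inv b)"
    using assms NP1_adj_sym[of "a \<otimes> inv b" \<one>] NP1_adj_sym[of \<one> "a \<otimes> inv b"] by auto
  finally show ?thesis .
qed

lemma NP1_adj_iff_cayley_adj:
  assumes "S = {x \<in> carrier G. adj \<one> x}" "a \<in> carrier G" "b \<in> carrier G"
  shows "adj a b \<longleftrightarrow> cayley_adj G S a b"
proof -
  have "adj a b \<longleftrightarrow> a \<otimes> inv b \<in> S" and "adj b a \<longleftrightarrow> b \<otimes> inv a \<in> S"
    using assms NP1_adj_iff_one_adj_quotient[of a b] NP1_adj_iff_one_adj_quotient[of b a] by auto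
  then show ?thesis
    using assms NP1_adj_sym unfolding cayley_adj_def by blast
qed

lemma generate_neighbours_of_one:
  assumes "digitally_connected (carrier G) adj"
    and S: "S = {x \<in> carrier G. adj \<one> x}"
  shows "generate G S = carrier G"
proof
  show "generate G S \<subseteq> carrier G"
    using S by (intro generate_incl) auto
  show "carrier G \<subseteq> generate G S"
  proof
    fix x assume "x \<in> carrier G"
    then have "(\<lambda>u v. u \<in> carrier G \<and> v \<in> carrier G \<and> adj u v)\<^sup>*\<^sup>* \<one> x"
      using assms(1) by (simp add: digitally_connected_def)
    then show "x \<in> generate G S"
    proof (induction rule: rtranclp_induct)
      case base
      show ?case by (rule generate.one)
    next
      case (step y z)
      then have y: "y \<in> carrier G" and z: "z \<in> carrier G" and "adj z y"
        using NP1_adj_sym by auto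
      then have "z \<otimes> inv y \<in> S"
        using S NP1_adj_iff_one_adj_quotient[OF z y] by simp
      then have "z \<otimes> inv y \<otimes> y \<in> generate G S"
        using step.IH by (blast intro: generate.eng generate.incl)
      then show ?case using y z by (simp add: m_assoc)
    qed
  qed
qed

end

theorem theoremA:
  fixes G :: "('a, 'b) monoid_scheme" and adj :: "'a \<Rightarrow> 'a \<Rightarrow> bool" and S :: "'a set"
  assumes "NP1_digital_topological_group G adj"
    and "digitally_connected (carrier G) adj"
    and "S = {x \<in> carrier G. adj \<one>\<^bsub>G\<^esub> x}"
  shows "generate G S = carrier G \<and>
         (\<forall>a\<in>carrier G. \<forall>b\<in>carrier G. adj a b \<longleftrightarrow> cayley_adj G S a b)"
  using generate_neighbours_of_one[OF assms] NP1_adj_iff_cayley_adj[OF assms(1,3)] by blast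

end
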